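(* Let $G=(V,E)$ be a finite graph with boundary $B\subseteq V$, $|B|\ge2$, such that $B$ is an independent set of $G$. Let $d_1\le d_2\le\cdots\le d_{|B|}$ be the degrees (in $G$) of the boundary vertices, sorted in non-decreasing order. Then $$\sigma_k(G,B)\le d_k,\qquad k=1,2,\ldots,|B|.$$
   Context: $G=(V,E)$ is a finite undirected graph. A boundary is a subset $B\subseteq V$ with $|B|\ge2$. For $f:V\to\mathbb{R}$, $f\neq0$, the Rayleigh quotient is $R(f)=\frac{\sum_{\{x,y\}\in E}(f(x)-f(y))^2}{\sum_{x\in B}f(x)^2}$, interpreted as $+\infty$ if $f$ vanishes on $B$. For $1\le k\le|B|$, the $k$-th Steklov eigenvalue is $\sigma_k(G,B)=\min_{W\subseteq\mathbb{R}^V,\dim W=k}\max_{0\ne f\in W}R(f)$. *)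

theory Defs
  imports "HOL-Analysis.Analysis" "HOL-Library.Multiset" "HOL-Library.Extended_Real"
begin

text \<open>A finite simple undirected graph: the vertex set is the finite type 'n,
  the edges are given by a symmetric irreflexive adjacency relation E.
  Functions f : V -> R are vectors in real ^ 'n.\<close>

definition graph_energy :: "('n::finite \<Rightarrow> 'n \<Rightarrow> bool) \<Rightarrow> real ^ 'n \<Rightarrow> real" where
  "graph_energy E f =
     (\<Sum>p\<in>{(x, y). E x y}. (f $ fst p - f $ snd p)\<^sup>2) / 2"
  \<comment> \<open>sum over unordered edges {x,y}: each edge appears as two ordered pairs\<close>

definition rayleigh :: "('n::finite \<Rightarrow> 'n \<Rightarrow> bool) \<Rightarrow> 'n set \<Rightarrow> real ^ 'n \<Rightarrow> ereal" where
  "rayleigh E B f =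
     (if (\<Sum>x\<in>B. (f $ x)\<^sup>2) = 0 then \<infinity>
      else ereal (graph_energy E f / (\<Sum>x\<in>B. (f $ x)\<^sup>2)))"

definition steklov :: "('n::finite \<Rightarrow> 'n \<Rightarrow> bool) \<Rightarrow> 'n set \<Rightarrow> nat \<Rightarrow> ereal" where
  "steklov E B k =
     (INF W\<in>{W :: (real ^ 'n) set. subspace W \<and> dim W = k}.
        (SUP f\<in>W - {0}. rayleigh E B f))"

definition degree :: "('n::finite \<Rightarrow> 'n \<Rightarrow> bool) \<Rightarrow> 'n \<Rightarrow> nat" where
  "degree E x = card {y. E x y}"

definition boundary_degrees :: "('n::finite \<Rightarrow> 'n \<Rightarrow> bool) \<Rightarrow> 'n set \<Rightarrow> nat list" where
  "boundary_degrees E B = sorted_list_of_multiset (image_mset (degree E) (mset_set B))"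

end

theory Submission
  imports Defs
begin

text \<open>Pick $k$ boundary vertices of degree at most $d_k$ and use the $k$-dimensional space of
  functions supported on them as test space in the min-max characterisation. Since the boundary
  is independent, every edge meets the support in at most one endpoint, so the energy of such an
  $f$ is $\sum_x \deg(x) f(x)^2 \le d_k \sum_{x\in B} f(x)^2$.\<close>

lemma card_le_sorted_image_nth:
  fixes g :: "'a \<Rightarrow> 'b::linorder"
  assumes "i < card A"
  shows "Suc i \<le> card {x\<in>A. g x \<le> sorted_list_of_multiset (image_mset g (mset_set A)) ! i}"
proof -
  have "finite A"
    using assms card.infinite by fastforce
  define L where "L = sorted_list_of_multiset (image_mset g (mset_set A))"
  define P where "P = (\<lambda>v. v \<le> L ! i)"
  have mset_L: "mset L = image_mset g (mset_set A)"
    unfolding L_def by simp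
  then have length_L: "length L = card A"
    by (metis size_image_mset size_mset size_mset_set)
  have "\<forall>v\<in>set (take (Suc i) L). P v"
  proof
    fix v assume "v \<in> set (take (Suc i) L)"
    then obtain j where "j < length (take (Suc i) L)" and "v = take (Suc i) L ! j"
      by (auto simp: in_set_conv_nth)
    then have "j \<le> i" and "v = L ! j"
      by auto
    then show "P v"
      using assms length_L unfolding P_def L_def by (simp add: sorted_nth_mono)
  qed
  then have "Suc i = length (filter P (take (Suc i) L))"
    using assms length_L by simp
  also have "\<dots> \<le> length (filter P L)"
    by (metis append_take_drop_id filter_append le_add1 length_append)
  also have "\<dots> = size (filter_mset P (image_mset g (mset_set A)))"
    by (metis mset_L mset_filter size_mset)
  also have "\<dots> = card {x\<in>A. P (g x)}"
    using \<open>finite A\<close> by (simp add: image_mset_filter_mset_swap[symmetric])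
  finally show ?thesis
    unfolding P_def L_def .
qed

lemma sum_edges_fst:
  fixes E :: "'n::finite \<Rightarrow> 'n \<Rightarrow> bool" and h :: "'n \<Rightarrow> real"
  shows "(\<Sum>p\<in>{(x, y). E x y}. h (fst p)) = (\<Sum>x\<in>UNIV. real (degree E x) * h x)"
proof -
  have "{(x, y). E x y} = Sigma UNIV (\<lambda>x. {y. E x y})"
    by auto
  then have "(\<Sum>p\<in>{(x, y). E x y}. h (fst p)) = (\<Sum>(x, y)\<in>Sigma UNIV (\<lambda>x. {y. E x y}). h x)"
    by (simp add: case_prod_unfold)
  also have "\<dots> = (\<Sum>x\<in>UNIV. \<Sum>y\<in>{y. E x y}. h x)"
    by (rule sum.Sigma[symmetric]) auto
  finally show ?thesis
    by (simp add: degree_def)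
qed

lemma sum_edges_snd:
  fixes E :: "'n::finite \<Rightarrow> 'n \<Rightarrow> bool" and h :: "'n \<Rightarrow> real"
  assumes "symp E"
  shows "(\<Sum>p\<in>{(x, y). E x y}. h (snd p)) = (\<Sum>p\<in>{(x, y). E x y}. h (fst p))"
proof -
  have "prod.swap ` {(x, y). E x y} = {(x, y). E x y}"
    using assms by (auto simp: symp_def image_iff)
  then show ?thesis
    by (metis (no_types, lifting) fst_swap inj_swap sum.reindex_cong)
qed

lemma graph_energy_eq_degree_sum:
  fixes E :: "'n::finite \<Rightarrow> 'n \<Rightarrow> bool"
  assumes "symp E" and "\<And>x y. E x y \<Longrightarrow> f $ x * f $ y = 0"
  shows "graph_energy E f = (\<Sum>x\<in>UNIV. real (degree E x) * (f $ x)\<^sup>2)"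
proof -
  let ?P = "{(x, y). E x y}"
  have "(\<Sum>p\<in>?P. (f $ fst p - f $ snd p)\<^sup>2) = (\<Sum>p\<in>?P. (f $ fst p)\<^sup>2 + (f $ snd p)\<^sup>2)"
  proof (rule sum.cong)
    fix p assume "p \<in> ?P"
    then have "E (fst p) (snd p)"
      by auto
    then have "f $ fst p * f $ snd p = 0"
      by (rule assms(2))
    then show "(f $ fst p - f $ snd p)\<^sup>2 = (f $ fst p)\<^sup>2 + (f $ snd p)\<^sup>2"
      by (simp add: power2_diff)
  qed simp
  also have "\<dots> = 2 * (\<Sum>p\<in>?P. (f $ fst p)\<^sup>2)"
    by (simp add: sum.distrib sum_edges_snd[OF assms(1), of "\<lambda>x. (f $ x)\<^sup>2"])
  also have "\<dots> = 2 * (\<Sum>x\<in>UNIV. real (degree E x) * (f $ x)\<^sup>2)"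
    by (simp add: sum_edges_fst[where h="\<lambda>x. (f $ x)\<^sup>2"])
  finally show ?thesis
    unfolding graph_energy_def by simp
qed

lemma rayleigh_le_of_support_independent:
  fixes E :: "'n::finite \<Rightarrow> 'n \<Rightarrow> bool"
  assumes "symp E" and "S \<subseteq> B" and "\<forall>x\<in>S. \<forall>y\<in>S. \<not> E x y"
    and "\<forall>x\<in>S. real (degree E x) \<le> d"
    and "f \<noteq> 0" and "\<forall>y. y \<notin> S \<longrightarrow> f $ y = 0"
  shows "rayleigh E B f \<le> ereal d"
proof -
  have "(\<Sum>x\<in>B. (f $ x)\<^sup>2) = (\<Sum>x\<in>S. (f $ x)\<^sup>2)"
    using assms(2,6) by (intro sum.mono_neutral_right) auto
  moreover have "(\<Sum>x\<in>S. (f $ x)\<^sup>2) > 0"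
  proof -
    obtain z where "f $ z \<noteq> 0"
      using assms(5) by (metis vec_eq_iff zero_index)
    with assms(6) show ?thesis
      by (intro sum_pos2[of S z]) auto
  qed
  moreover have "graph_energy E f \<le> d * (\<Sum>x\<in>S. (f $ x)\<^sup>2)"
  proof -
    have "graph_energy E f = (\<Sum>x\<in>UNIV. real (degree E x) * (f $ x)\<^sup>2)"
      using assms(1,3,6) by (intro graph_energy_eq_degree_sum) auto
    also have "\<dots> = (\<Sum>x\<in>S. real (degree E x) * (f $ x)\<^sup>2)"
      using assms(6) by (intro sum.mono_neutral_right) auto
    also have "\<dots> \<le> (\<Sum>x\<in>S. d * (f $ x)\<^sup>2)"
      using assms(4) by (intro sum_mono mult_right_mono) auto
    finally show ?thesis
      by (simp add: sum_distrib_left)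
  qed
  ultimately show ?thesis
    unfolding rayleigh_def by (simp add: pos_divide_le_eq)
qed

lemma steklov_le_of_independent_subset:
  fixes E :: "'n::finite \<Rightarrow> 'n \<Rightarrow> bool"
  assumes "symp E" and "S \<subseteq> B" and "\<forall>x\<in>S. \<forall>y\<in>S. \<not> E x y"
    and "\<forall>x\<in>S. real (degree E x) \<le> d" and "card S = k"
  shows "steklov E B k \<le> ereal d"
proof -
  define W where "W = {f :: real ^ 'n. \<forall>y. y \<notin> S \<longrightarrow> f $ y = 0}"
  have "subspace W" and "dim W = k"
    using subspace_substandard_cart[where 'a=real and P="\<lambda>y. y \<notin> S"]
      dim_substandard_cart[where 'a=real and d=S] assms(5)
    unfolding W_def subspace_vec_eq dim_vec_eq by simp_all
  then have "steklov E B k \<le> (SUP f\<in>W - {0}. rayleigh E B f)"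
    unfolding steklov_def by (intro INF_lower) auto
  also have "\<dots> \<le> ereal d"
    using assms(1-4) unfolding W_def
    by (intro SUP_least) (auto intro: rayleigh_le_of_support_independent)
  finally show ?thesis .
qed

theorem mainTheorem5:
  fixes E :: "'n::finite \<Rightarrow> 'n \<Rightarrow> bool" and B :: "'n set" and k :: nat
  assumes "symp E" and "irreflp E"
    and "card B \<ge> 2"
    and "\<forall>x\<in>B. \<forall>y\<in>B. \<not> E x y"
    and "1 \<le> k" and "k \<le> card B"
  shows "steklov E B k \<le> ereal (real (boundary_degrees E B ! (k - 1)))"
proof -
  define d where "d = boundary_degrees E B ! (k - 1)"
  have "k \<le> card {x\<in>B. degree E x \<le> d}"
    using card_le_sorted_image_nth[of "k - 1" B "degree E"] assms(5,6)
    unfolding d_def boundary_degrees_def by simp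
  then obtain S where "S \<subseteq> {x\<in>B. degree E x \<le> d}" and "card S = k"
    by (meson obtain_subset_with_card_n)
  then show ?thesis
    using assms(1,4) unfolding d_def[symmetric]
    by (intro steklov_le_of_independent_subset[of E S B]) auto
qed

end
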